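(* Let $X$ be an eventually dendric shift space. For every $k\ge1$ there is an $n\ge1$ such that the following holds: whenever $p,w\in\mathcal L(X)$ with $|p|\le k$ and $|w|\ge n$ are such that both $pw$ and $w$ are left-special, there is a letter $b\in A$ which is the unique letter such that $wb$ is left-special and also the unique letter such that $pwb$ is left-special, and moreover $\ell(pwb)=\ell(pw)$ and $\ell(wb)=\ell(w)$.
   Context: $A$ is a finite alphabet; a shift space is a closed shift-invariant subset $X\subseteq A^{\mathbb Z}$; $\mathcal L(X)$ is its set of finite factors, $\mathcal L_{\ge m}(X)$ its words of length $\ge m$. For $w\in\mathcal L(X)$, $\ell(w)=\mathrm{Card}\{a\in A:aw\in\mathcal L(X)\}$, and $w$ is left-special if $\ell(w)\ge2$. The extension graph $\mathcal E_1(w)$ is the undirected bipartite graph with vertex set the disjoint union of $\{a\in A: aw\in\mathcal L(X)\}$ and $\{b\in A: wb\in\mathcal L(X)\}$ and an edge $(a,b)$ iff $awb\in\mathcal L(X)$. $X$ is eventually dendric if for some $m\ge0$, $\mathcal E_1(w)$ is a tree for every $w\in\mathcal L_{\ge m}(X)$. *)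

theory Defs
  imports "HOL-Analysis.Analysis"
begin

text \<open>Alphabet A = UNIV of a finite type 'a. Points of the full shift are maps int => 'a,
  with the product topology of the discrete topology on 'a.\<close>

definition shift :: "(int \<Rightarrow> 'a) \<Rightarrow> (int \<Rightarrow> 'a)" where
  "shift x = (\<lambda>i. x (i + 1))"

definition shift_space :: "(int \<Rightarrow> 'a::finite) set \<Rightarrow> bool" where
  "shift_space X \<longleftrightarrow>
     closedin (product_topology (\<lambda>_::int. discrete_topology (UNIV::'a set)) UNIV) X
     \<and> shift ` X = X"

definition lang :: "(int \<Rightarrow> 'a) set \<Rightarrow> 'a list set" where
  "lang X = {w. \<exists>x\<in>X. \<exists>i::int. w = map (\<lambda>j. x (i + int j)) [0..<length w]}"

definition lval :: "(int \<Rightarrow> 'a) set \<Rightarrow> 'a list \<Rightarrow> nat" where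
  "lval X w = card {a. a # w \<in> lang X}"

definition left_special :: "(int \<Rightarrow> 'a) set \<Rightarrow> 'a list \<Rightarrow> bool" where
  "left_special X w \<longleftrightarrow> w \<in> lang X \<and> lval X w \<ge> 2"

definition ugraph_connected :: "'v set \<Rightarrow> ('v \<Rightarrow> 'v \<Rightarrow> bool) \<Rightarrow> bool" where
  "ugraph_connected V adj \<longleftrightarrow>
     (\<forall>u\<in>V. \<forall>v\<in>V. (u, v) \<in> {(x, y). x \<in> V \<and> y \<in> V \<and> adj x y}\<^sup>*)"

definition ugraph_has_cycle :: "'v set \<Rightarrow> ('v \<Rightarrow> 'v \<Rightarrow> bool) \<Rightarrow> bool" where
  "ugraph_has_cycle V adj \<longleftrightarrow>
     (\<exists>vs. length vs \<ge> 3 \<and> distinct vs \<and> set vs \<subseteq> V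
        \<and> (\<forall>i. Suc i < length vs \<longrightarrow> adj (vs ! i) (vs ! Suc i))
        \<and> adj (last vs) (hd vs))"

definition ugraph_tree :: "'v set \<Rightarrow> ('v \<Rightarrow> 'v \<Rightarrow> bool) \<Rightarrow> bool" where
  "ugraph_tree V adj \<longleftrightarrow> V \<noteq> {} \<and> ugraph_connected V adj \<and> \<not> ugraph_has_cycle V adj"

text \<open>Extension graph E_1(w): left vertices Inl a (aw in L), right vertices Inr b (wb in L),
  edge between Inl a and Inr b iff awb in L.\<close>

definition ext_vertices :: "(int \<Rightarrow> 'a) set \<Rightarrow> 'a list \<Rightarrow> ('a + 'a) set" where
  "ext_vertices X w = Inl ` {a. a # w \<in> lang X} \<union> Inr ` {b. w @ [b] \<in> lang X}"

fun ext_adj :: "(int \<Rightarrow> 'a) set \<Rightarrow> 'a list \<Rightarrow> ('a + 'a) \<Rightarrow> ('a + 'a) \<Rightarrow> bool" where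
  "ext_adj X w (Inl a) (Inr b) = (a # w @ [b] \<in> lang X)"
| "ext_adj X w (Inr b) (Inl a) = (a # w @ [b] \<in> lang X)"
| "ext_adj X w _ _ = False"

definition eventually_dendric :: "(int \<Rightarrow> 'a) set \<Rightarrow> bool" where
  "eventually_dendric X \<longleftrightarrow>
     (\<exists>m::nat. \<forall>w\<in>lang X. length w \<ge> m \<longrightarrow> ugraph_tree (ext_vertices X w) (ext_adj X w))"

end

theory Submission
  imports Defs
begin

text \<open>
  For a dendric word w the extension graph is a tree, so it has one edge fewer than vertices,
  which says that the excess lval X w - 1 of w is at least the total excess of its right
  extensions. Hence the total excess of the words of length n (the first difference of the
  factor complexity) is eventually constant, and then every left special word of large length
  has a left special right extension; the number of left special words of length n is then
  nondecreasing and bounded, so eventually each left special word has exactly one left special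
  right extension, with the same excess. In this regime a left special word is determined by its
  length and a fixed-length prefix. A stabilisation argument on the finitely many prefix data of
  pairs p @ w, w of left special words finally yields a letter extending both.
\<close>

section \<open>Walks in undirected graphs\<close>

definition has_walk :: "('v \<Rightarrow> 'v \<Rightarrow> bool) \<Rightarrow> 'v \<Rightarrow> 'v \<Rightarrow> nat \<Rightarrow> bool" where
  "has_walk adj u v n \<longleftrightarrow>
     (\<exists>xs. successively adj xs \<and> xs \<noteq> [] \<and> hd xs = u \<and> last xs = v \<and> length xs = Suc n)"

definition walk_dist :: "('v \<Rightarrow> 'v \<Rightarrow> bool) \<Rightarrow> 'v \<Rightarrow> 'v \<Rightarrow> nat" where
  "walk_dist adj u v = (LEAST n. has_walk adj u v n)"

lemma has_walk_refl: "has_walk adj u u 0"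
  unfolding has_walk_def by (intro exI[of _ "[u]"]) simp

lemma has_walk_snoc:
  assumes "has_walk adj u v n" "adj v z"
  shows "has_walk adj u z (Suc n)"
proof -
  obtain xs where xs: "successively adj xs" "xs \<noteq> []" "hd xs = u" "last xs = v" "length xs = Suc n"
    using assms(1) unfolding has_walk_def by blast
  have "successively adj (xs @ [z])"
    using xs assms(2) by (simp add: successively_append_iff)
  then show ?thesis
    unfolding has_walk_def using xs by (intro exI[of _ "xs @ [z]"]) simp
qed

lemma has_walk_nth:
  assumes "successively adj xs" "i < length xs"
  shows "has_walk adj (hd xs) (xs ! i) i"
proof -
  let ?ys = "take (Suc i) xs"
  have "successively adj ?ys"
    using assms(1) by (auto simp: successively_conv_nth)
  moreover have "?ys \<noteq> []" "length ?ys = Suc i" "hd ?ys = hd xs"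
    using assms(2) by (auto simp: hd_take)
  moreover have "last ?ys = xs ! i"
    using assms(2) by (simp add: take_Suc_conv_app_nth)
  ultimately show ?thesis
    unfolding has_walk_def by blast
qed

lemma has_walk_if_rtrancl:
  assumes "(u, v) \<in> {(x, y). x \<in> V \<and> y \<in> V \<and> adj x y}\<^sup>*"
  shows "\<exists>n. has_walk adj u v n"
  using assms
proof (induction rule: rtrancl_induct)
  case base
  show ?case using has_walk_refl ..
next
  case (step y z)
  then obtain n where "has_walk adj u y n" "adj y z" by blast
  then show ?case by (blast intro: has_walk_snoc)
qed

lemma walk_dist_le: "has_walk adj u v n \<Longrightarrow> walk_dist adj u v \<le> n"
  unfolding walk_dist_def by (rule Least_le)

lemma has_walk_walk_dist: "has_walk adj u v n \<Longrightarrow> has_walk adj u v (walk_dist adj u v)"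
  unfolding walk_dist_def by (rule LeastI)

lemma has_walk_side:
  assumes side: "\<And>x y. adj x y \<Longrightarrow> side x \<noteq> side y" and "has_walk adj u v n"
  shows "side v \<longleftrightarrow> (side u \<longleftrightarrow> even n)"
proof -
  obtain xs where xs: "successively adj xs" "xs \<noteq> []" "hd xs = u" "last xs = v" "length xs = Suc n"
    using assms(2) unfolding has_walk_def by blast
  have "side (xs ! i) \<longleftrightarrow> (side (xs ! 0) \<longleftrightarrow> even i)" if "i < length xs" for i
    using that
  proof (induction i)
    case (Suc i)
    then show ?case using side[OF successively_nth[OF xs(1) Suc.prems]] by auto
  qed simp
  from this[of n] show ?thesis using xs by (simp add: hd_conv_nth last_conv_nth)
qed

lemma successively_remove_cycles:
  "successively P xs \<Longrightarrow> xs \<noteq> [] \<Longrightarrow> \<exists>ys. successively P ys \<and> distinct ys \<and> ys \<noteq> []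
     \<and> hd ys = hd xs \<and> last ys = last xs \<and> set ys \<subseteq> set xs"
proof (induction "length xs" arbitrary: xs rule: less_induct)
  case less
  show ?case
  proof (cases "distinct xs")
    case False
    then obtain a z b c where xs: "xs = a @ [z] @ b @ [z] @ c" using not_distinct_decomp by blast
    let ?xs' = "a @ z # c"
    have "successively P ?xs'"
      using less.prems(1) unfolding xs by (auto simp: successively_append_iff successively_Cons)
    moreover have "length ?xs' < length xs" unfolding xs by simp
    ultimately obtain ys where ys: "successively P ys" "distinct ys" "ys \<noteq> []"
      "hd ys = hd ?xs'" "last ys = last ?xs'" "set ys \<subseteq> set ?xs'"
      using less.hyps by blast
    moreover have "hd ?xs' = hd xs" "last ?xs' = last xs" "set ?xs' \<subseteq> set xs"
      unfolding xs by (auto simp: hd_append)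
    ultimately show ?thesis by (metis subset_trans)
  qed (use less.prems in blast)
qed

lemma ugraph_has_cycle_if_walk_avoiding:
  assumes adj_in: "\<And>x y. adj x y \<Longrightarrow> x \<in> V \<and> y \<in> V"
    and xs: "successively adj xs" "xs \<noteq> []" "hd xs \<noteq> last xs"
    and v: "v \<notin> set xs" "adj (last xs) v" "adj v (hd xs)"
  shows "ugraph_has_cycle V adj"
proof -
  obtain ys where ys: "successively adj ys" "distinct ys" "ys \<noteq> []"
    "hd ys = hd xs" "last ys = last xs" "set ys \<subseteq> set xs"
    using successively_remove_cycles[OF xs(1,2)] by blast
  have "length ys \<noteq> 1"
  proof
    assume "length ys = 1"
    then obtain y where "ys = [y]" by (auto simp: length_Suc_conv)
    then show False using ys xs(3) by simp
  qed
  moreover have "length ys \<noteq> 0" using ys(3) by simp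
  ultimately have "length ys \<ge> 2" by linarith
  have "set ys \<subseteq> V"
  proof
    fix z assume "z \<in> set ys"
    then obtain i where i: "i < length ys" "z = ys ! i" by (auto simp: in_set_conv_nth)
    show "z \<in> V"
    proof (cases "Suc i < length ys")
      case True
      then show ?thesis using adj_in[OF successively_nth[OF ys(1) True]] i by blast
    next
      case False
      then have "i = length ys - 1" using i by simp
      then have "z = last ys" using i ys(3) by (simp add: last_conv_nth)
      then show ?thesis using adj_in v(2) ys(5) by metis
    qed
  qed
  show ?thesis
    unfolding ugraph_has_cycle_def
  proof (intro exI[of _ "ys @ [v]"] conjI)
    show "3 \<le> length (ys @ [v])" using \<open>length ys \<ge> 2\<close> by simp
    show "distinct (ys @ [v])" using ys v(1) by auto
    show "set (ys @ [v]) \<subseteq> V" using \<open>set ys \<subseteq> V\<close> adj_in v(2) by auto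
    have "successively adj (ys @ [v])"
      using ys v by (simp add: successively_append_iff)
    then show "\<forall>i. Suc i < length (ys @ [v]) \<longrightarrow> adj ((ys @ [v]) ! i) ((ys @ [v]) ! Suc i)"
      by (simp add: successively_conv_nth)
    show "adj (last (ys @ [v])) (hd (ys @ [v]))" using ys v by simp
  qed
qed

context
  fixes V :: "'v set" and adj :: "'v \<Rightarrow> 'v \<Rightarrow> bool" and side :: "'v \<Rightarrow> bool" and r :: 'v
  assumes adj_sym: "\<And>x y. adj x y \<Longrightarrow> adj y x"
    and adj_in: "\<And>x y. adj x y \<Longrightarrow> x \<in> V"
    and adj_side: "\<And>x y. adj x y \<Longrightarrow> side x \<noteq> side y"
    and root: "r \<in> V"
    and connected: "ugraph_connected V adj"
    and acyclic: "\<not> ugraph_has_cycle V adj"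
begin

lemma has_walk_root_walk_dist:
  assumes "v \<in> V"
  shows "has_walk adj r v (walk_dist adj r v)"
proof -
  have "\<forall>u\<in>V. \<forall>v\<in>V. (u, v) \<in> {(x, y). x \<in> V \<and> y \<in> V \<and> adj x y}\<^sup>*"
    using connected unfolding ugraph_connected_def .
  then have "(r, v) \<in> {(x, y). x \<in> V \<and> y \<in> V \<and> adj x y}\<^sup>*"
    using root assms by blast
  then have "\<exists>n. has_walk adj r v n" by (rule has_walk_if_rtrancl)
  then obtain n where "has_walk adj r v n" ..
  then show ?thesis by (rule has_walk_walk_dist)
qed

lemma walk_dist_root: "walk_dist adj r r = 0"
  using walk_dist_le[OF has_walk_refl] by simp

lemma walk_dist_adj_le:
  assumes "adj u v"
  shows "walk_dist adj r v \<le> Suc (walk_dist adj r u)"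
proof -
  have "has_walk adj r u (walk_dist adj r u)"
    using adj_in[OF assms] by (rule has_walk_root_walk_dist)
  then have "has_walk adj r v (Suc (walk_dist adj r u))"
    using assms by (rule has_walk_snoc)
  then show ?thesis by (rule walk_dist_le)
qed

lemma walk_dist_adj_neq:
  assumes "adj u v"
  shows "walk_dist adj r u \<noteq> walk_dist adj r v"
proof -
  have "u \<in> V" "v \<in> V" using adj_in[OF assms] adj_in[OF adj_sym[OF assms]] .
  then have "side u \<longleftrightarrow> (side r \<longleftrightarrow> even (walk_dist adj r u))"
    "side v \<longleftrightarrow> (side r \<longleftrightarrow> even (walk_dist adj r v))"
    using has_walk_side[of adj side, OF adj_side has_walk_root_walk_dist] by blast+
  then show ?thesis using adj_side[OF assms] by auto
qed

text \<open>Shortest walks from the root to two neighbours x, y of v one level closer to the root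
  close up, through v, to a cycle.\<close>

lemma walk_dist_parent_unique:
  assumes xv: "adj x v" and yv: "adj y v"
    and x: "walk_dist adj r x < walk_dist adj r v" and y: "walk_dist adj r y < walk_dist adj r v"
  shows "x = y"
proof (rule ccontr)
  assume "x \<noteq> y"
  define e where "e = walk_dist adj r x"
  have dv: "walk_dist adj r v = Suc e" and dy: "walk_dist adj r y = e"
    using walk_dist_adj_le[OF xv] walk_dist_adj_le[OF yv] x y unfolding e_def by auto
  obtain p1 where p1: "successively adj p1" "p1 \<noteq> []" "hd p1 = r" "last p1 = x" "length p1 = Suc e"
    using has_walk_root_walk_dist[OF adj_in[OF xv]] unfolding has_walk_def e_def by blast
  obtain p2 where p2: "successively adj p2" "p2 \<noteq> []" "hd p2 = r" "last p2 = y" "length p2 = Suc e"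
    using has_walk_root_walk_dist[OF adj_in[OF yv]] unfolding has_walk_def dy by blast
  have avoid: "v \<notin> set p" if "successively adj p" "hd p = r" "length p = Suc e" for p
  proof
    assume "v \<in> set p"
    then obtain i where "i < length p" "v = p ! i" by (auto simp: in_set_conv_nth)
    then have "walk_dist adj r v \<le> i" using has_walk_nth[OF that(1)] that(2) walk_dist_le by metis
    then show False using \<open>i < length p\<close> that(3) dv by simp
  qed
  have "e \<noteq> 0"
    using p1 p2 \<open>x \<noteq> y\<close> by (cases p1; cases p2) auto
  then obtain z zs where p2_eq: "p2 = r # z # zs"
    using p2 by (cases p2 rule: remdups_adj.cases) auto
  let ?q = "rev p1 @ z # zs"
  have "successively adj ?q"
    using p1 p2 adj_sym p2_eq
    by (auto simp: successively_append_iff last_rev intro: successively_mono)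
  moreover have "hd ?q = x" "last ?q = y" "v \<notin> set ?q"
    using p1 p2 p2_eq avoid[OF p1(1,3,5)] avoid[OF p2(1,3,5)] by (auto simp: hd_rev)
  ultimately show False
    using ugraph_has_cycle_if_walk_avoiding[of adj V ?q v] adj_in adj_sym xv yv \<open>x \<noteq> y\<close> acyclic
    by auto
qed

text \<open>Each edge is charged to its endpoint farther from the root; every vertex except the root
  is charged at most once.\<close>

lemma card_edges_le:
  assumes "finite V"
  shows "card {(u, v). adj u v \<and> side u} + 1 \<le> card V"
proof -
  let ?d = "walk_dist adj r" and ?E = "{(u, v). adj u v \<and> side u}"
  define near where "near = (\<lambda>(u, v). if ?d u < ?d v then u else v)"
  define far where "far = (\<lambda>(u, v). if ?d u < ?d v then v else u)"
  have edge: "adj (near e) (far e) \<and> ?d (near e) < ?d (far e)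
      \<and> e = (if side (far e) then (far e, near e) else (near e, far e))" if "e \<in> ?E" for e
  proof -
    obtain u v where e: "e = (u, v)" "adj u v" "side u" using \<open>e \<in> ?E\<close> by blast
    have "?d u \<noteq> ?d v" "\<not> side v" using walk_dist_adj_neq[OF e(2)] adj_side[OF e(2)] e(3) by auto
    then show ?thesis
      using e adj_sym[OF e(2)] unfolding near_def far_def by (cases "?d u < ?d v") auto
  qed
  have "inj_on far ?E"
  proof (rule inj_onI)
    fix e e' assume e: "e \<in> ?E" and e': "e' \<in> ?E" and far: "far e = far e'"
    have "near e = near e'"
      using walk_dist_parent_unique[of "near e" "far e" "near e'"] edge[OF e] edge[OF e'] far
      by simp
    then show "e = e'"
      using edge[OF e] edge[OF e'] far by metis
  qed
  moreover have "far e \<in> V - {r}" if "e \<in> ?E" for e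
    using edge[OF that] adj_in[OF adj_sym] walk_dist_root by fastforce
  ultimately have "card ?E \<le> card (V - {r})"
    using assms by (intro card_inj_on_le) auto
  moreover have "card V > 0" using assms root by (auto simp: card_gt_0_iff)
  ultimately show ?thesis
    using root by (simp add: card_Diff_singleton)
qed

end

section \<open>Factors and extension graphs\<close>

lemma lang_factor:
  assumes "xs @ ys @ zs \<in> lang X"
  shows "ys \<in> lang X"
proof -
  obtain x i where x: "x \<in> X" "xs @ ys @ zs = map (\<lambda>j. x (i + int j)) [0..<length (xs @ ys @ zs)]"
    using assms unfolding lang_def by blast
  have "ys = map (\<lambda>j. x (i + int (length xs) + int j)) [0..<length ys]"
  proof (rule nth_equalityI)
    fix j assume j: "j < length ys"
    have "ys ! j = (xs @ ys @ zs) ! (length xs + j)" using j by (simp add: nth_append)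
    also have "\<dots> = x (i + int (length xs + j))" using j by (subst x(2)) simp
    finally show "ys ! j = map (\<lambda>j. x (i + int (length xs) + int j)) [0..<length ys] ! j"
      using j by (simp add: add.assoc)
  qed simp
  then show ?thesis
    unfolding lang_def using x(1) by blast
qed

lemma lang_Cons_ex:
  assumes "w \<in> lang X"
  shows "\<exists>a. a # w \<in> lang X"
proof -
  obtain x i where x: "x \<in> X" "w = map (\<lambda>j. x (i + int j)) [0..<length w]"
    using assms unfolding lang_def by blast
  have "x (i - 1) # w = map (\<lambda>j. x (i - 1 + int j)) [0..<length (x (i - 1) # w)]"
  proof (rule nth_equalityI)
    fix j assume j: "j < length (x (i - 1) # w)"
    show "(x (i - 1) # w) ! j = map (\<lambda>j. x (i - 1 + int j)) [0..<length (x (i - 1) # w)] ! j"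
    proof (cases j)
      case (Suc j')
      then have "j' < length w" using j by simp
      then show ?thesis using Suc by (subst x(2)) (simp del: upt_Suc add: algebra_simps)
    qed (simp del: upt_Suc)
  qed simp
  then have "x (i - 1) # w \<in> lang X"
    unfolding lang_def using x(1) by (intro CollectI bexI[of _ x] exI[of _ "i - 1"])
  then show ?thesis ..
qed

lemma lval_pos:
  fixes X :: "(int \<Rightarrow> 'a::finite) set"
  assumes "w \<in> lang X"
  shows "lval X w \<ge> 1"
  using lang_Cons_ex[OF assms] by (auto simp: lval_def Suc_le_eq card_gt_0_iff)

lemma lval_snoc_le:
  fixes X :: "(int \<Rightarrow> 'a::finite) set"
  shows "lval X (w @ [b]) \<le> lval X w"
  unfolding lval_def using lang_factor[of "[]" "_ # w" "[b]"] by (intro card_mono) auto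

lemma left_special_snocD:
  fixes X :: "(int \<Rightarrow> 'a::finite) set"
  shows "left_special X (w @ [b]) \<Longrightarrow> left_special X w"
  unfolding left_special_def using lval_snoc_le[of X w b] lang_factor[of "[]" w "[b]"] by auto

lemma ext_adj_sym: "ext_adj X w x y \<Longrightarrow> ext_adj X w y x"
  by (cases x; cases y) auto

lemma ext_adj_isl: "ext_adj X w x y \<Longrightarrow> isl x \<noteq> isl y"
  by (cases x; cases y) auto

lemma ext_adj_in_ext_vertices: "ext_adj X w x y \<Longrightarrow> x \<in> ext_vertices X w"
  using lang_factor[of "[]" "_ # w" "[_]"] lang_factor[of "[_]" "w @ [_]" "[]"]
  by (cases x; cases y) (auto simp: ext_vertices_def)

definition snoc_excess :: "(int \<Rightarrow> 'a) set \<Rightarrow> 'a list \<Rightarrow> nat" where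
  "snoc_excess X w = (\<Sum>b | w @ [b] \<in> lang X. lval X (w @ [b]) - 1)"

text \<open>The left vertices of the extension graph number lval X w and the edges through Inr b
  number lval X (w @ [b]).\<close>

lemma snoc_excess_le_if_tree:
  fixes X :: "(int \<Rightarrow> 'a::finite) set"
  assumes "w \<in> lang X" and tree: "ugraph_tree (ext_vertices X w) (ext_adj X w)"
  shows "snoc_excess X w \<le> lval X w - 1"
proof -
  let ?R = "{b. w @ [b] \<in> lang X}" and ?V = "ext_vertices X w"
  obtain r where "r \<in> ?V" using tree unfolding ugraph_tree_def by blast
  have "finite ?V" by (simp add: ext_vertices_def)
  have edges: "{(u, v). ext_adj X w u v \<and> isl u}
      = (\<lambda>(b, a). (Inl a, Inr b)) ` (SIGMA b:?R. {a. a # w @ [b] \<in> lang X})"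
    using lang_factor[of "[_]" "w @ [_]" "[]"] by (auto elim!: ext_adj.elims simp: isl_def)
  have "card {(u, v). ext_adj X w u v \<and> isl u} = (\<Sum>b\<in>?R. lval X (w @ [b]))"
    unfolding edges by (subst card_image) (auto simp: inj_on_def lval_def)
  moreover have "card ?V = lval X w + card ?R"
    unfolding ext_vertices_def lval_def by (subst card_Un_disjoint) (auto simp: card_image)
  moreover have "card {(u, v). ext_adj X w u v \<and> isl u} + 1 \<le> card ?V"
    using card_edges_le[of "ext_adj X w" ?V isl r] ext_adj_sym ext_adj_in_ext_vertices ext_adj_isl
      \<open>r \<in> ?V\<close> \<open>finite ?V\<close> tree unfolding ugraph_tree_def by blast
  moreover have "(\<Sum>b\<in>?R. lval X (w @ [b]) - 1) = (\<Sum>b\<in>?R. lval X (w @ [b])) - card ?R"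
    using lval_pos by (subst sum_subtractf_nat) auto
  ultimately show ?thesis using lval_pos[OF assms(1)] by (simp add: snoc_excess_def)
qed

section \<open>Eventually constant sequences\<close>

lemma decreasing_from_le:
  fixes f :: "nat \<Rightarrow> 'b::preorder"
  assumes dec: "\<And>n. m \<le> n \<Longrightarrow> f (Suc n) \<le> f n" and "m \<le> k" and "k \<le> n"
  shows "f n \<le> f k"
  using assms(3)
proof (induction rule: dec_induct)
  case (step n)
  have "f (Suc n) \<le> f n" using dec \<open>m \<le> k\<close> \<open>k \<le> n\<close> by simp
  then show ?case using step.IH by (rule order_trans)
qed simp

lemma eventually_const_if_decreasing:
  fixes f :: "nat \<Rightarrow> nat"
  assumes "\<And>n. m \<le> n \<Longrightarrow> f (Suc n) \<le> f n"
  shows "\<exists>N\<ge>m. \<forall>n\<ge>N. f n = f N"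
proof -
  obtain N where N: "m \<le> N" "\<And>n. m \<le> n \<Longrightarrow> f N \<le> f n"
    using ex_has_least_nat[of "\<lambda>n. m \<le> n" m f] by auto
  have "f n = f N" if "N \<le> n" for n
  proof (rule antisym)
    show "f n \<le> f N" using assms N(1) that by (rule decreasing_from_le)
    show "f N \<le> f n" using N that by simp
  qed
  then show ?thesis using N(1) by blast
qed

lemma eventually_const_if_increasing_bounded:
  fixes f :: "nat \<Rightarrow> nat"
  assumes inc: "\<And>n. m \<le> n \<Longrightarrow> f n \<le> f (Suc n)" and bound: "\<And>n. m \<le> n \<Longrightarrow> f n \<le> B"
  shows "\<exists>N\<ge>m. \<forall>n\<ge>N. f n = f N"
proof -
  have "B - f (Suc n) \<le> B - f n" if "m \<le> n" for n
    using inc[OF that] by (rule diff_le_mono2)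
  then obtain N where N: "m \<le> N" "\<forall>n\<ge>N. B - f n = B - f N"
    using eventually_const_if_decreasing[of m "\<lambda>n. B - f n"] by blast
  have "f n = f N" if "N \<le> n" for n
    using N(2)[rule_format, OF that] bound[of n] bound[of N] N(1) that by simp
  then show ?thesis using N(1) by blast
qed

lemma eventually_const_if_decreasing_finite:
  assumes dec: "\<And>n. m \<le> n \<Longrightarrow> A (Suc n) \<subseteq> A n" and "finite (A m)"
  shows "\<exists>N\<ge>m. \<forall>n\<ge>N. A n = A N"
proof -
  have sub: "A n \<subseteq> A k" if "m \<le> k" "k \<le> n" for k n
    using dec that by (rule decreasing_from_le)
  have fin: "finite (A n)" if "m \<le> n" for n
    using sub[OF order_refl that] assms(2) by (rule finite_subset)
  have "card (A (Suc n)) \<le> card (A n)" if "m \<le> n" for n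
    using fin[OF that] dec[OF that] by (rule card_mono)
  then obtain N where N: "m \<le> N" "\<forall>n\<ge>N. card (A n) = card (A N)"
    using eventually_const_if_decreasing[of m "\<lambda>n. card (A n)"] by blast
  have "A n = A N" if "N \<le> n" for n
    using card_subset_eq[OF fin[OF N(1)] sub[OF N(1) that]] N(2)[rule_format, OF that] by simp
  then show ?thesis using N(1) by blast
qed

section \<open>Excess and left special words\<close>

definition lang_len :: "(int \<Rightarrow> 'a) set \<Rightarrow> nat \<Rightarrow> 'a list set" where
  "lang_len X n = {w \<in> lang X. length w = n}"

text \<open>The first difference p(n + 1) - p(n) of the factor complexity p.\<close>

definition left_excess :: "(int \<Rightarrow> 'a) set \<Rightarrow> nat \<Rightarrow> nat" where
  "left_excess X n = (\<Sum>w\<in>lang_len X n. lval X w - 1)"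

lemma finite_lang_len: "finite (lang_len (X :: (int \<Rightarrow> 'a::finite) set) n)"
proof (rule finite_subset)
  show "lang_len X n \<subseteq> {xs. set xs \<subseteq> UNIV \<and> length xs = n}"
    unfolding lang_len_def by auto
  show "finite {xs :: 'a list. set xs \<subseteq> UNIV \<and> length xs = n}"
    by (rule finite_lists_length_eq) simp
qed

lemma lang_len_Suc:
  "lang_len X (Suc n) = (\<lambda>(w, b). w @ [b]) ` (SIGMA w:lang_len X n. {b. w @ [b] \<in> lang X})"
proof
  show "lang_len X (Suc n) \<subseteq> (\<lambda>(w, b). w @ [b]) ` (SIGMA w:lang_len X n. {b. w @ [b] \<in> lang X})"
  proof
    fix u assume u: "u \<in> lang_len X (Suc n)"
    then have "u \<noteq> []" unfolding lang_len_def by auto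
    then have u_eq: "u = butlast u @ [last u]" by simp
    then have "butlast u \<in> lang X"
      using lang_factor[of "[]" "butlast u" "[last u]"] u unfolding lang_len_def by simp
    then show "u \<in> (\<lambda>(w, b). w @ [b]) ` (SIGMA w:lang_len X n. {b. w @ [b] \<in> lang X})"
      using u u_eq unfolding lang_len_def by (intro image_eqI[of _ _ "(butlast u, last u)"]) auto
  qed
qed (auto simp: lang_len_def)

lemma left_excess_Suc:
  fixes X :: "(int \<Rightarrow> 'a::finite) set"
  shows "left_excess X (Suc n) = (\<Sum>w\<in>lang_len X n. snoc_excess X w)"
proof -
  let ?S = "SIGMA w:lang_len X n. {b. w @ [b] \<in> lang X}"
  have "inj_on (\<lambda>(w, b). w @ [b]) ?S"
    by (auto simp: inj_on_def)
  then have "left_excess X (Suc n) = (\<Sum>(w, b)\<in>?S. lval X (w @ [b]) - 1)"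
    unfolding left_excess_def lang_len_Suc by (simp add: sum.reindex case_prod_unfold)
  also have "\<dots> = (\<Sum>w\<in>lang_len X n. snoc_excess X w)"
    unfolding snoc_excess_def by (rule sum.Sigma[symmetric]) (simp_all add: finite_lang_len)
  finally show ?thesis .
qed

text \<open>Above the dendric threshold the excess of a word bounds that of its right extensions, so the
  total excess cannot increase; being a natural number it stabilises, and from then on no word
  can lose excess.\<close>

lemma eventually_left_excess_conserved:
  fixes X :: "(int \<Rightarrow> 'a::finite) set"
  assumes "eventually_dendric X"
  shows "\<exists>N. \<forall>w\<in>lang X. N \<le> length w \<longrightarrow>
           snoc_excess X w = lval X w - 1"
proof -
  obtain m where tree: "\<And>w. w \<in> lang X \<Longrightarrow> m \<le> length w \<Longrightarrow> ugraph_tree (ext_vertices X w) (ext_adj X w)"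
    using assms unfolding eventually_dendric_def by blast
  have le: "snoc_excess X w \<le> lval X w - 1"
    if "w \<in> lang_len X n" "m \<le> n" for w n
    using that snoc_excess_le_if_tree[OF _ tree] unfolding lang_len_def by auto
  have "left_excess X (Suc n) \<le> left_excess X n" if "m \<le> n" for n
    unfolding left_excess_Suc unfolding left_excess_def using le that by (intro sum_mono)
  then obtain N where N: "m \<le> N" "\<forall>n\<ge>N. left_excess X n = left_excess X N"
    using eventually_const_if_decreasing[of m "left_excess X"] by blast
  have "snoc_excess X w = lval X w - 1"
    if w: "w \<in> lang X" "N \<le> length w" for w
  proof (rule ccontr)
    let ?n = "length w"
    assume "\<not> ?thesis"
    then have "left_excess X (Suc ?n) < left_excess X ?n"
      unfolding left_excess_Suc unfolding left_excess_def
      using le N(1) w by (intro sum_strict_mono_ex1[OF finite_lang_len])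
        (auto simp: lang_len_def intro!: bexI[of _ w] le_neq_implies_less)
    then show False
      using N(2)[rule_format, of ?n] N(2)[rule_format, of "Suc ?n"] w(2) by simp
  qed
  then show ?thesis by blast
qed

lemma left_special_snoc_ex:
  fixes X :: "(int \<Rightarrow> 'a::finite) set"
  assumes "snoc_excess X w = lval X w - 1" and "left_special X w"
  shows "\<exists>b. left_special X (w @ [b])"
proof (rule ccontr)
  assume "\<nexists>b. left_special X (w @ [b])"
  then have "snoc_excess X w = 0"
    unfolding left_special_def snoc_excess_def by (intro sum.neutral) auto
  then show False using assms unfolding left_special_def by simp
qed

lemma lval_snoc_eq_if_unique_left_special:
  fixes X :: "(int \<Rightarrow> 'a::finite) set"
  assumes conserved: "snoc_excess X w = lval X w - 1"
    and "w \<in> lang X" and b: "left_special X (w @ [b])"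
    and unique: "\<And>c. left_special X (w @ [c]) \<Longrightarrow> c = b"
  shows "lval X (w @ [b]) = lval X w"
proof -
  let ?R = "{b. w @ [b] \<in> lang X}"
  have "b \<in> ?R" using b unfolding left_special_def by simp
  have rest: "(\<Sum>c\<in>?R - {b}. lval X (w @ [c]) - 1) = 0"
    using unique lval_pos unfolding left_special_def by (intro sum.neutral) force
  have "lval X w - 1 = (\<Sum>c\<in>?R. lval X (w @ [c]) - 1)"
    using conserved by (simp add: snoc_excess_def)
  also have "\<dots> = (lval X (w @ [b]) - 1) + (\<Sum>c\<in>?R - {b}. lval X (w @ [c]) - 1)"
    using \<open>b \<in> ?R\<close> by (rule sum.remove[OF finite])
  finally have "lval X w - 1 = lval X (w @ [b]) - 1"
    using rest by simp
  then show ?thesis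
    using lval_pos[OF \<open>w \<in> lang X\<close>] lval_pos[of "w @ [b]" X] \<open>b \<in> ?R\<close> by simp
qed

definition left_special_words :: "(int \<Rightarrow> 'a) set \<Rightarrow> nat \<Rightarrow> 'a list set" where
  "left_special_words X n = {w. length w = n \<and> left_special X w}"

lemma left_special_words_subset: "left_special_words X n \<subseteq> lang_len X n"
  unfolding left_special_words_def lang_len_def left_special_def by auto

lemma finite_left_special_words: "finite (left_special_words (X :: (int \<Rightarrow> 'a::finite) set) n)"
  using left_special_words_subset finite_lang_len by (rule finite_subset)

lemma card_left_special_words_le:
  fixes X :: "(int \<Rightarrow> 'a::finite) set"
  shows "card (left_special_words X n) \<le> left_excess X n"
proof -
  have "card (left_special_words X n) = (\<Sum>w\<in>left_special_words X n. 1)"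
    by simp
  also have "\<dots> \<le> (\<Sum>w\<in>left_special_words X n. lval X w - 1)"
    by (rule sum_mono) (auto simp: left_special_words_def left_special_def)
  also have "\<dots> \<le> left_excess X n"
    unfolding left_excess_def
    using finite_lang_len left_special_words_subset by (rule sum_mono2) simp
  finally show ?thesis .
qed

lemma butlast_left_special_words:
  fixes X :: "(int \<Rightarrow> 'a::finite) set"
  assumes conserved: "\<And>w. w \<in> lang X \<Longrightarrow> length w = n \<Longrightarrow>
      snoc_excess X w = lval X w - 1"
  shows "butlast ` left_special_words X (Suc n) = left_special_words X n"
proof
  show "butlast ` left_special_words X (Suc n) \<subseteq> left_special_words X n"
  proof
    fix v assume "v \<in> butlast ` left_special_words X (Suc n)"
    then obtain u where u: "u \<in> left_special_words X (Suc n)" "v = butlast u" by blast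
    then have "u \<noteq> []" unfolding left_special_words_def by auto
    then have "left_special X (butlast u @ [last u])"
      using u unfolding left_special_words_def by simp
    then show "v \<in> left_special_words X n"
      using u left_special_snocD unfolding left_special_words_def by auto
  qed
  show "left_special_words X n \<subseteq> butlast ` left_special_words X (Suc n)"
  proof
    fix w assume w: "w \<in> left_special_words X n"
    then have "w \<in> lang X" unfolding left_special_words_def left_special_def by simp
    then obtain b where "left_special X (w @ [b])"
      using left_special_snoc_ex[OF conserved] w unfolding left_special_words_def by blast
    then show "w \<in> butlast ` left_special_words X (Suc n)"
      using w unfolding left_special_words_def by (intro image_eqI[of _ _ "w @ [b]"]) auto
  qed
qed

text \<open>Once the excess is conserved every left special word has a left special right
  extension, so the number of left special words of length n is nondecreasing; it is bounded by
  the (now constant) total excess, hence eventually constant, and then the extension is unique.\<close>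

lemma eventually_unique_left_special_snoc:
  fixes X :: "(int \<Rightarrow> 'a::finite) set"
  assumes "eventually_dendric X"
  shows "\<exists>N. \<forall>w. N \<le> length w \<and> left_special X w \<longrightarrow>
           (\<exists>b. left_special X (w @ [b]) \<and> (\<forall>c. left_special X (w @ [c]) \<longrightarrow> c = b)
              \<and> lval X (w @ [b]) = lval X w)"
proof -
  obtain N1 where conserved: "\<And>w. w \<in> lang X \<Longrightarrow> N1 \<le> length w \<Longrightarrow>
      snoc_excess X w = lval X w - 1"
    using eventually_left_excess_conserved[OF assms] by blast
  let ?LS = "left_special_words X"
  have excess_Suc: "left_excess X (Suc n) = left_excess X n" if "N1 \<le> n" for n
  proof -
    have "left_excess X (Suc n) = (\<Sum>w\<in>lang_len X n. snoc_excess X w)"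
      by (rule left_excess_Suc)
    also have "\<dots> = (\<Sum>w\<in>lang_len X n. lval X w - 1)"
      using that unfolding lang_len_def by (intro sum.cong refl conserved) auto
    finally show ?thesis unfolding left_excess_def .
  qed
  have excess_const: "left_excess X n = left_excess X N1" if "N1 \<le> n" for n
    using that by (induction rule: dec_induct) (simp_all add: excess_Suc)
  have butlast_LS: "butlast ` ?LS (Suc n) = ?LS n" if "N1 \<le> n" for n
    using conserved that by (intro butlast_left_special_words) simp
  have "card (?LS n) \<le> card (?LS (Suc n))" if "N1 \<le> n" for n
    using card_image_le[OF finite_left_special_words, of butlast X "Suc n"] butlast_LS[OF that]
    by simp
  moreover have "card (?LS n) \<le> left_excess X N1" if "N1 \<le> n" for n
    using card_left_special_words_le[of X n] excess_const[OF that] by simp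
  ultimately have "\<exists>N\<ge>N1. \<forall>n\<ge>N. card (?LS n) = card (?LS N)"
    by (intro eventually_const_if_increasing_bounded)
  then obtain N where N: "N1 \<le> N" "\<forall>n\<ge>N. card (?LS n) = card (?LS N)" by blast
  show ?thesis
  proof (intro exI[of _ N] allI impI)
    fix w assume w: "N \<le> length w \<and> left_special X w"
    let ?n = "length w"
    have "w \<in> lang X" "N1 \<le> ?n" using w N(1) unfolding left_special_def by auto
    have "card (?LS (Suc ?n)) = card (?LS ?n)"
      using N(2)[rule_format, of ?n] N(2)[rule_format, of "Suc ?n"] w by simp
    then have inj: "inj_on butlast (?LS (Suc ?n))"
      using butlast_LS[OF \<open>N1 \<le> ?n\<close>] by (intro eq_card_imp_inj_on[OF finite_left_special_words]) simp
    have unique: "c = b" if "left_special X (w @ [b])" "left_special X (w @ [c])" for b c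
    proof -
      have "w @ [c] = w @ [b]"
        using inj_onD[OF inj, of "w @ [c]" "w @ [b]"] that unfolding left_special_words_def by simp
      then show ?thesis by simp
    qed
    obtain b where b: "left_special X (w @ [b])"
      using left_special_snoc_ex[OF conserved] \<open>w \<in> lang X\<close> \<open>N1 \<le> ?n\<close> w by blast
    moreover have "lval X (w @ [b]) = lval X w"
      using lval_snoc_eq_if_unique_left_special[OF conserved \<open>w \<in> lang X\<close> b] unique[OF b]
        \<open>w \<in> lang X\<close> \<open>N1 \<le> ?n\<close> by blast
    ultimately show "\<exists>b. left_special X (w @ [b]) \<and> (\<forall>c. left_special X (w @ [c]) \<longrightarrow> c = b)
              \<and> lval X (w @ [b]) = lval X w"
      using unique by blast
  qed
qed

section \<open>Common left special extensions\<close>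

lemma left_special_eq_if_take_eq:
  fixes X :: "(int \<Rightarrow> 'a::finite) set"
  assumes unique: "\<And>w b c. N \<le> length w \<Longrightarrow> left_special X (w @ [b]) \<Longrightarrow> left_special X (w @ [c]) \<Longrightarrow> b = c"
    and "N \<le> length u" "length u = length v" "left_special X u" "left_special X v"
    and "take N u = take N v"
  shows "u = v"
  using assms(2-)
proof (induction u arbitrary: v rule: rev_induct)
  case Nil
  then show ?case by simp
next
  case (snoc b u)
  obtain v' c where v: "v = v' @ [c]"
    using snoc.prems(2) by (cases v rule: rev_exhaust) auto
  show ?case
  proof (cases "N \<le> length u")
    case True
    have "u = v'"
    proof (rule snoc.IH)
      show "left_special X u" "left_special X v'"
        using snoc.prems(3,4) v left_special_snocD by blast+
      show "take N u = take N v'"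
        using snoc.prems(2,5) v True by (simp add: take_append)
    qed (use True snoc.prems(2) v in simp_all)
    moreover have "b = c"
      using unique[OF True] snoc.prems(3,4) v \<open>u = v'\<close> by simp
    ultimately show ?thesis using v by simp
  next
    case False
    then have "take N (u @ [b]) = u @ [b]" "take N v = v"
      using snoc.prems(1,2) by simp_all
    then show ?thesis using snoc.prems(5) by simp
  qed
qed

text \<open>The triples (length p, take N (p @ w), take N w) realised by left special p @ w and w
  with length w = n form a decreasing family of finite sets, hence stabilise; a triple that is
  still realised at length n + 1 yields, by left_special_eq_if_take_eq, a common left special
  extension of the original p @ w and w.\<close>

lemma eventually_common_left_special_snoc:
  fixes X :: "(int \<Rightarrow> 'a::finite) set"
  assumes unique: "\<And>w b c. N \<le> length w \<Longrightarrow> left_special X (w @ [b]) \<Longrightarrow> left_special X (w @ [c]) \<Longrightarrow> b = c"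
  shows "\<exists>n. \<forall>p w. length p \<le> k \<and> n \<le> length w \<and> left_special X (p @ w) \<and> left_special X w \<longrightarrow>
           (\<exists>b. left_special X (p @ w @ [b]) \<and> left_special X (w @ [b]))"
proof -
  define P where "P n = {(length p, take N (p @ w), take N w) | p w. length p \<le> k \<and> length w = n
      \<and> left_special X (p @ w) \<and> left_special X w}" for n
  have "P (Suc n) \<subseteq> P n" if "N \<le> n" for n
  proof
    fix t assume "t \<in> P (Suc n)"
    then obtain p w where t: "t = (length p, take N (p @ w), take N w)"
      "length p \<le> k" "length w = Suc n" "left_special X (p @ w)" "left_special X w"
      unfolding P_def by blast
    then obtain w' c where w: "w = w' @ [c]" by (cases w rule: rev_exhaust) auto
    have "left_special X (p @ w')" "left_special X w'"
      using left_special_snocD[of X "p @ w'" c] left_special_snocD[of X w' c] t(4,5) w by simp_all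
    moreover have "take N (p @ w) = take N (p @ w')" "take N w = take N w'"
      using t(3) w that by (simp_all add: take_append)
    ultimately show "t \<in> P n"
      unfolding P_def using t w by auto
  qed
  moreover have "finite (P N)"
  proof (rule finite_subset)
    show "P N \<subseteq> {..k} \<times> {xs. set xs \<subseteq> UNIV \<and> length xs \<le> N} \<times> {xs. set xs \<subseteq> UNIV \<and> length xs \<le> N}"
      unfolding P_def by auto
    show "finite ({..k} \<times> {xs :: 'a list. set xs \<subseteq> UNIV \<and> length xs \<le> N}
        \<times> {xs :: 'a list. set xs \<subseteq> UNIV \<and> length xs \<le> N})"
      by (intro finite_cartesian_product finite_lists_length_le) simp_all
  qed
  ultimately have "\<exists>n0\<ge>N. \<forall>n\<ge>n0. P n = P n0"
    by (rule eventually_const_if_decreasing_finite)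
  then obtain n0 where n0: "N \<le> n0" "\<forall>n\<ge>n0. P n = P n0" by blast
  have "\<exists>b. left_special X (p @ w @ [b]) \<and> left_special X (w @ [b])"
    if pw: "length p \<le> k" "n0 \<le> length w" "left_special X (p @ w)" "left_special X w" for p w
  proof -
    have "(length p, take N (p @ w), take N w) \<in> P (length w)"
      unfolding P_def using pw by blast
    also have "P (length w) = P (Suc (length w))"
      using n0(2)[rule_format, of "length w"] n0(2)[rule_format, of "Suc (length w)"] pw(2) by simp
    finally obtain p' w'' where pw'': "length p' = length p" "length w'' = Suc (length w)"
      "left_special X (p' @ w'')" "left_special X w''"
      "take N (p' @ w'') = take N (p @ w)" "take N w'' = take N w"
      unfolding P_def by auto
    then obtain w' b where "w'' = w' @ [b]" by (cases w'' rule: rev_exhaust) auto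
    then have pw': "length p' = length p" "length w' = length w"
      "left_special X (p' @ w' @ [b])" "left_special X (w' @ [b])"
      "take N (p' @ w' @ [b]) = take N (p @ w)" "take N (w' @ [b]) = take N w"
      using pw'' by simp_all
    have "N \<le> length w" using n0(1) pw(2) by simp
    have "take N w' = take N w" "take N (p' @ w') = take N (p @ w)"
      using pw'(1,2,5,6) \<open>N \<le> length w\<close> by (simp_all add: take_append)
    moreover have "left_special X w'" "left_special X (p' @ w')"
      using left_special_snocD[of X w' b] left_special_snocD[of X "p' @ w'" b] pw'(3,4) by simp_all
    ultimately have "w' = w" "p' @ w' = p @ w"
      using left_special_eq_if_take_eq[where N = N and X = X and u = w' and v = w, OF unique]
        left_special_eq_if_take_eq[where N = N and X = X and u = "p' @ w'" and v = "p @ w", OF unique]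
        \<open>N \<le> length w\<close> pw'(1,2) pw(3,4) by simp_all
    then show ?thesis using pw'(3,4) by auto
  qed
  then show ?thesis by blast
qed

lemma eventually_unique_common_left_special_snoc:
  fixes X :: "(int \<Rightarrow> 'a::finite) set"
  assumes "eventually_dendric X"
  shows "\<exists>n. \<forall>p w. length p \<le> k \<and> n \<le> length w \<and> left_special X (p @ w) \<and> left_special X w \<longrightarrow>
           (\<exists>b. (\<forall>c. left_special X (w @ [c]) \<longleftrightarrow> c = b) \<and> (\<forall>c. left_special X (p @ w @ [c]) \<longleftrightarrow> c = b)
              \<and> lval X (p @ w @ [b]) = lval X (p @ w) \<and> lval X (w @ [b]) = lval X w)"
proof -
  obtain N where N: "\<And>w. N \<le> length w \<Longrightarrow> left_special X w \<Longrightarrow>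
      \<exists>b. left_special X (w @ [b]) \<and> (\<forall>c. left_special X (w @ [c]) \<longrightarrow> c = b)
        \<and> lval X (w @ [b]) = lval X w"
    using eventually_unique_left_special_snoc[OF assms] by blast
  have unique: "b = c" if "N \<le> length w" "left_special X (w @ [b])" "left_special X (w @ [c])" for w b c
    using N[OF that(1) left_special_snocD[OF that(2)]] that(2,3) by blast
  obtain n where n: "\<And>p w. length p \<le> k \<Longrightarrow> n \<le> length w \<Longrightarrow> left_special X (p @ w) \<Longrightarrow>
      left_special X w \<Longrightarrow> \<exists>b. left_special X (p @ w @ [b]) \<and> left_special X (w @ [b])"
  proof -
    have "\<exists>n. \<forall>p w. length p \<le> k \<and> n \<le> length w \<and> left_special X (p @ w) \<and> left_special X w \<longrightarrow>
        (\<exists>b. left_special X (p @ w @ [b]) \<and> left_special X (w @ [b]))"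
      by (rule eventually_common_left_special_snoc) (blast intro: unique)
    then show ?thesis using that by blast
  qed
  have main: "\<exists>b. (\<forall>c. left_special X (w @ [c]) \<longleftrightarrow> c = b)
                 \<and> (\<forall>c. left_special X (p @ w @ [c]) \<longleftrightarrow> c = b)
                 \<and> lval X (p @ w @ [b]) = lval X (p @ w) \<and> lval X (w @ [b]) = lval X w"
    if pw: "length p \<le> k" "max n N \<le> length w" "left_special X (p @ w)" "left_special X w" for p w
  proof -
    have "N \<le> length w" "N \<le> length (p @ w)" "n \<le> length w" using pw(2) by auto
    obtain b where b: "left_special X ((p @ w) @ [b])" "left_special X (w @ [b])"
      using n[OF pw(1) \<open>n \<le> length w\<close> pw(3,4)] by auto
    have iff: "left_special X (u @ [c]) \<longleftrightarrow> c = b"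
      if "N \<le> length u" "left_special X (u @ [b])" for u c
      using unique[OF that(1) that(2)] that(2) by blast
    have lval_eq: "lval X (u @ [b]) = lval X u" if "N \<le> length u" "left_special X (u @ [b])" for u
      using N[OF that(1) left_special_snocD[OF that(2)]] iff[OF that] by blast
    show ?thesis
      using iff[OF \<open>N \<le> length w\<close> b(2)] iff[OF \<open>N \<le> length (p @ w)\<close> b(1)]
        lval_eq[OF \<open>N \<le> length w\<close> b(2)] lval_eq[OF \<open>N \<le> length (p @ w)\<close> b(1)]
      by (intro exI[of _ b]) simp
  qed
  show ?thesis
    by (intro exI[of _ "max n N"] allI impI main) auto
qed

theorem mainTheorem7:
  fixes X :: "(int \<Rightarrow> 'a::finite) set"
  assumes "shift_space X" and "eventually_dendric X"
  shows "\<forall>k::nat. k \<ge> 1 \<longrightarrow> (\<exists>n::nat. n \<ge> 1 \<and>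
           (\<forall>p w. p \<in> lang X \<and> w \<in> lang X \<and> length p \<le> k \<and> length w \<ge> n
              \<and> left_special X (p @ w) \<and> left_special X w \<longrightarrow>
              (\<exists>b. (\<forall>c. left_special X (w @ [c]) \<longleftrightarrow> c = b)
                 \<and> (\<forall>c. left_special X (p @ w @ [c]) \<longleftrightarrow> c = b)
                 \<and> lval X (p @ w @ [b]) = lval X (p @ w)
                 \<and> lval X (w @ [b]) = lval X w)))"
  apply (intro allI impI)
  subgoal for k
    using eventually_unique_common_left_special_snoc[OF assms(2), of k]
    apply (elim exE)
    subgoal for n by (intro exI[of _ "Suc n"] conjI allI impI) (auto dest: Suc_leD)
    done
  done

end
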